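(* Let $v\in L_2(0,1)$ and $\alpha\in[0,2\pi)$, and let $A(v,0,\alpha)$ be the self-adjoint operator in $L_2(0,1)$ acting by $A(v,0,\alpha)\psi=i\psi'+v(x)\big[\psi(0)-\tfrac{i}{2}\langle\psi,v\rangle\big]$ on the domain of $\psi\in W_2^1(0,1)$ with $\psi(1)=e^{i\alpha}[\psi(0)-i\langle\psi,v\rangle]$. For real $\lambda$ put $$\tilde v=\int_0^1e^{i\lambda y}v(y)\,dy,\qquad \hat v=\int_0^1\!\!\int_0^xe^{-i\lambda(x-y)}v(y)\overline{v(x)}\,dy\,dx,$$ $$\chi(\lambda)=i\big(2i+\overline{\tilde v}\big)\big(e^{-i\lambda}\tilde v+ie^{i\alpha}\hat v\big)+i\big(2-\hat v\big)\big(e^{-i\lambda}-e^{i\alpha}+ie^{i\alpha}\overline{\tilde v}\big).$$ Then the real zeros of $\chi$, and only they, are the eigenvalues of $A(v,0,\alpha)$. For such a zero $\lambda$, every nontrivial solution $(C_1,C_2)$ of the homogeneous system $$C_1\big(e^{-i\lambda}-e^{i\alpha}+ie^{i\alpha}\overline{\tilde v}\big)-iC_2\big(e^{-i\lambda}\tilde v+ie^{i\alpha}\hat v\big)=0,\qquad C_1\big(2i+\overline{\tilde v}\big)+iC_2\big(2-\hat v\big)=0$$ gives an eigenfunction $\psi(x)=C_1e^{-i\lambda x}-iC_2\int_0^xe^{-i\lambda(x-y)}v(y)\,dy$.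
   Context: $\langle f,g\rangle=\int_0^1 f\bar g\,dx$; $W_2^1(0,1)$ is the Sobolev space; $\overline{\tilde v}$ is the complex conjugate of $\tilde v$. *)

theory Defs
  imports "HOL-Analysis.Analysis"
begin

text \<open>Functions on (0,1) are modelled as functions real => complex; only their
values on [0,1] matter.  Integrals over (0,1) are Lebesgue integrals over the
closed interval [0,1] (differs from (0,1) by a null set).\<close>

definition L2_01 :: "(real \<Rightarrow> complex) \<Rightarrow> bool" where
  "L2_01 f \<longleftrightarrow> set_borel_measurable lborel {0..1} f \<and>
     set_integrable lborel {0..1} (\<lambda>x. (cmod (f x))\<^sup>2)"

definition ip01 :: "(real \<Rightarrow> complex) \<Rightarrow> (real \<Rightarrow> complex) \<Rightarrow> complex" where
  "ip01 f g = (LINT x:{0..1}|lborel. f x * cnj (g x))"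

text \<open>Sobolev space W_2^1(0,1): psi is absolutely continuous on [0,1] with
derivative g in L_2(0,1), i.e. psi(x) = psi(0) + integral_0^x g.\<close>
definition W21_deriv :: "(real \<Rightarrow> complex) \<Rightarrow> (real \<Rightarrow> complex) \<Rightarrow> bool" where
  "W21_deriv \<psi> g \<longleftrightarrow> L2_01 g \<and>
     (\<forall>x\<in>{0..1}. \<psi> x = \<psi> 0 + (LINT t:{0..x}|lborel. g t))"

definition W21 :: "(real \<Rightarrow> complex) \<Rightarrow> bool" where
  "W21 \<psi> \<longleftrightarrow> (\<exists>g. W21_deriv \<psi> g)"

definition domA :: "(real \<Rightarrow> complex) \<Rightarrow> real \<Rightarrow> (real \<Rightarrow> complex) \<Rightarrow> bool" where
  "domA v \<alpha> \<psi> \<longleftrightarrow> W21 \<psi> \<and>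
     \<psi> 1 = exp (\<i> * complex_of_real \<alpha>) * (\<psi> 0 - \<i> * ip01 \<psi> v)"

definition eigenfunA :: "(real \<Rightarrow> complex) \<Rightarrow> real \<Rightarrow> real \<Rightarrow> (real \<Rightarrow> complex) \<Rightarrow> bool" where
  "eigenfunA v \<alpha> lam \<psi> \<longleftrightarrow> domA v \<alpha> \<psi> \<and>
     \<not> (AE x in lborel. x \<in> {0..1} \<longrightarrow> \<psi> x = 0) \<and>
     (\<exists>g. W21_deriv \<psi> g \<and>
        (AE x in lborel. x \<in> {0..1} \<longrightarrow>
           \<i> * g x + v x * (\<psi> 0 - (\<i> / 2) * ip01 \<psi> v) = complex_of_real lam * \<psi> x))"

definition eigenvalueA :: "(real \<Rightarrow> complex) \<Rightarrow> real \<Rightarrow> real \<Rightarrow> bool" where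
  "eigenvalueA v \<alpha> lam \<longleftrightarrow> (\<exists>\<psi>. eigenfunA v \<alpha> lam \<psi>)"

definition vtilde :: "(real \<Rightarrow> complex) \<Rightarrow> real \<Rightarrow> complex" where
  "vtilde v lam = (LINT y:{0..1}|lborel. exp (\<i> * complex_of_real (lam * y)) * v y)"

definition vhat :: "(real \<Rightarrow> complex) \<Rightarrow> real \<Rightarrow> complex" where
  "vhat v lam = (LINT x:{0..1}|lborel.
      (LINT y:{0..x}|lborel. exp (- \<i> * complex_of_real (lam * (x - y))) * v y) * cnj (v x))"

definition chi :: "(real \<Rightarrow> complex) \<Rightarrow> real \<Rightarrow> real \<Rightarrow> complex" where
  "chi v \<alpha> lam =
     \<i> * (2 * \<i> + cnj (vtilde v lam)) *
       (exp (- \<i> * complex_of_real lam) * vtilde v lam + \<i> * exp (\<i> * complex_of_real \<alpha>) * vhat v lam)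
   + \<i> * (2 - vhat v lam) *
       (exp (- \<i> * complex_of_real lam) - exp (\<i> * complex_of_real \<alpha>)
        + \<i> * exp (\<i> * complex_of_real \<alpha>) * cnj (vtilde v lam))"

end

theory Submission
  imports Defs
begin

text \<open>
On [0,1] the eigenvalue equation reads psi' = -i lam psi - i C2 v, where
C2 = -(psi(0) - (i/2) <psi,v>) is a constant. Hence psi is determined by C1 = psi(0) and C2:
psi(x) = C1 e^(-i lam x) - i C2 K(x), with the Duhamel integral
K(x) = int_0^x e^(-i lam (x - y)) v(y) dy. Evaluating psi(1) and <psi,v>, which is where vtilde
and vhat enter, the boundary condition and the definition of C2 become a homogeneous 2x2 linear
system for (C1, C2) whose determinant is chi(lam). Conversely, every nontrivial solution of the
system makes this psi an eigenfunction; psi does not vanish a.e., since psi = 0 forces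
C1 = psi(0) = 0 and K = 0, hence vhat = 0, and then the second equation gives C2 = 0.
\<close>

section \<open>Square-integrable functions on [0,1]\<close>

lemma L2_01_set_borel_measurable: "L2_01 f \<Longrightarrow> set_borel_measurable borel {0..1} f"
  by (simp add: L2_01_def set_borel_measurable_def)

lemma L2_01_set_integrable: "L2_01 f \<Longrightarrow> set_integrable lborel {0..1} f"
proof -
  assume f: "L2_01 f"
  have "set_integrable lborel {0..1::real} (\<lambda>x. 1::real)"
    by (intro borel_integrable_atLeastAtMost' continuous_intros)
  then have "set_integrable lborel {0..1::real} (\<lambda>x. 1 + (cmod (f x))\<^sup>2)"
    using f by (auto simp: L2_01_def intro!: set_integral_add)
  then show ?thesis
  proof (rule set_integrable_bound)
    show "set_borel_measurable lborel {0..1} f" using f by (simp add: L2_01_def)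
    have "r \<le> 1 + r\<^sup>2" for r :: real
      using zero_le_power2[of "r - 1/2"] by (simp add: power2_eq_square algebra_simps)
    then show "AE x in lborel. x \<in> {0..1} \<longrightarrow> norm (f x) \<le> norm (1 + (cmod (f x))\<^sup>2)"
      by (intro AE_I2) (simp add: add_nonneg_nonneg)
  qed
qed

lemma L2_01_set_integrable_bounded_mult:
  assumes f: "L2_01 f" and S: "S \<subseteq> {0..1}" "S \<in> sets borel"
    and h: "set_borel_measurable borel S h" and B: "\<And>x. x \<in> S \<Longrightarrow> norm (h x) \<le> B"
  shows "set_integrable lborel S (\<lambda>x. h x * f x)"
proof -
  have "set_integrable lborel S f"
    by (rule set_integrable_subset[OF L2_01_set_integrable[OF f]]) (use S in auto)
  then have "set_integrable lborel S (\<lambda>x. of_real (max B 0) * f x)"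
    by simp
  then show ?thesis
  proof (rule set_integrable_bound)
    have "(\<lambda>x. indicator S x *\<^sub>R (h x * f x)) = (\<lambda>x. (indicator S x *\<^sub>R h x) * (indicator {0..1} x *\<^sub>R f x))"
      using S by (auto simp: indicator_def fun_eq_iff)
    moreover have "(\<lambda>x. (indicator S x *\<^sub>R h x) * (indicator {0..1} x *\<^sub>R f x)) \<in> borel_measurable borel"
      using h L2_01_set_borel_measurable[OF f]
      unfolding set_borel_measurable_def by (rule borel_measurable_times)
    ultimately show "set_borel_measurable lborel S (\<lambda>x. h x * f x)"
      by (simp add: set_borel_measurable_def)
    show "AE x in lborel. x \<in> S \<longrightarrow> norm (h x * f x) \<le> norm (of_real (max B 0) * f x)"
      using B by (intro AE_I2) (force simp: norm_mult intro: mult_right_mono)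
  qed
qed

lemma L2_01_cnj: "L2_01 f \<Longrightarrow> L2_01 (\<lambda>x. cnj (f x))"
proof -
  assume f: "L2_01 f"
  have "(\<lambda>x. cnj (indicator {0..1} x *\<^sub>R f x)) \<in> borel_measurable borel"
    using L2_01_set_borel_measurable[OF f] unfolding set_borel_measurable_def
    by (rule borel_measurable_continuous_on[OF continuous_on_cnj[OF continuous_on_id]])
  then show ?thesis
    using f unfolding L2_01_def set_borel_measurable_def by simp
qed

lemma L2_01_cmult: "L2_01 f \<Longrightarrow> L2_01 (\<lambda>x. c * f x)"
proof -
  assume f: "L2_01 f"
  have "(\<lambda>x. c * (indicator {0..1} x *\<^sub>R f x)) \<in> borel_measurable borel"
    using L2_01_set_borel_measurable[OF f] unfolding set_borel_measurable_def
    by (rule borel_measurable_times[OF borel_measurable_const])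
  moreover have "set_integrable lborel {0..1} (\<lambda>x. (cmod c)\<^sup>2 * (cmod (f x))\<^sup>2)"
    using f by (simp add: L2_01_def)
  ultimately show ?thesis
    by (simp add: L2_01_def set_borel_measurable_def norm_mult power_mult_distrib)
qed

lemma L2_01_add:
  assumes f: "L2_01 f" and g: "L2_01 g"
  shows "L2_01 (\<lambda>x. f x + g x)"
proof -
  have meas: "set_borel_measurable lborel {0..1} (\<lambda>x. f x + g x)"
    using L2_01_set_borel_measurable[OF f] L2_01_set_borel_measurable[OF g]
    by (simp add: set_borel_measurable_def scaleR_add_right)
  have "set_integrable lborel {0..1} (\<lambda>x. 2 * (cmod (f x))\<^sup>2 + 2 * (cmod (g x))\<^sup>2)"
    using f g by (simp add: L2_01_def)
  then have "set_integrable lborel {0..1} (\<lambda>x. (cmod (f x + g x))\<^sup>2)"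
  proof (rule set_integrable_bound)
    have "(\<lambda>x. (cmod (indicator {0..1} x *\<^sub>R (f x + g x)))\<^sup>2) \<in> borel_measurable borel"
      using meas unfolding set_borel_measurable_def by measurable
    moreover have "(\<lambda>x. indicator {0..1} x *\<^sub>R (cmod (f x + g x))\<^sup>2) = (\<lambda>x. (cmod (indicator {0..1} x *\<^sub>R (f x + g x)))\<^sup>2)"
      by (simp add: fun_eq_iff indicator_def)
    ultimately show "set_borel_measurable lborel {0..1} (\<lambda>x. (cmod (f x + g x))\<^sup>2)"
      unfolding set_borel_measurable_def by simp
    have "(cmod (a + b))\<^sup>2 \<le> 2 * (cmod a)\<^sup>2 + 2 * (cmod b)\<^sup>2" for a b :: complex
    proof -
      have "(cmod (a + b))\<^sup>2 \<le> (cmod a + cmod b)\<^sup>2"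
        by (rule power_mono[OF norm_triangle_ineq]) simp
      also have "\<dots> \<le> 2 * (cmod a)\<^sup>2 + 2 * (cmod b)\<^sup>2"
        using zero_le_power2[of "cmod a - cmod b"] by (simp add: power2_eq_square algebra_simps)
      finally show ?thesis .
    qed
    then show "AE x in lborel. x \<in> {0..1} \<longrightarrow> norm ((cmod (f x + g x))\<^sup>2) \<le> norm (2 * (cmod (f x))\<^sup>2 + 2 * (cmod (g x))\<^sup>2)"
      by (intro AE_I2) simp
  qed
  with meas show ?thesis by (simp add: L2_01_def)
qed

lemma continuous_on_imp_L2_01: "continuous_on {0..1} f \<Longrightarrow> L2_01 f"
  unfolding L2_01_def set_borel_measurable_def
  by (auto intro!: borel_measurable_continuous_on_indicator borel_integrable_atLeastAtMost' continuous_intros)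

section \<open>Integrals and integral equations on intervals\<close>

lemma set_integrable_imp_set_borel_measurable:
  "set_integrable M A f \<Longrightarrow> set_borel_measurable M A f"
  unfolding set_integrable_def set_borel_measurable_def by (rule borel_measurable_integrable)

lemma set_lebesgue_integral_cnj: "cnj (LINT x:A|M. f x) = (LINT x:A|M. cnj (f x))"
  unfolding set_lebesgue_integral_def
  by (subst Bochner_Integration.integral_cnj[symmetric]) (rule Bochner_Integration.integral_cong; simp)

lemma set_lebesgue_integral_cong_AE_set_measurable:
  fixes f g :: "'a \<Rightarrow> 'b::{banach, second_countable_topology}"
  assumes "set_borel_measurable M A f" "set_borel_measurable M A g"
    and "AE x in M. x \<in> A \<longrightarrow> f x = g x"
  shows "(LINT x:A|M. f x) = (LINT x:A|M. g x)"
  unfolding set_lebesgue_integral_def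
proof (rule integral_cong_AE)
  show "(\<lambda>x. indicator A x *\<^sub>R f x) \<in> borel_measurable M"
    "(\<lambda>x. indicator A x *\<^sub>R g x) \<in> borel_measurable M"
    using assms(1,2) by (simp_all add: set_borel_measurable_def)
  show "AE x in M. indicator A x *\<^sub>R f x = indicator A x *\<^sub>R g x"
    using assms(3) by eventually_elim (auto simp: indicator_def)
qed

lemma continuous_on_indefinite_set_integral:
  fixes f :: "real \<Rightarrow> complex"
  assumes "set_integrable lborel {a..b} f"
  shows "continuous_on {a..b} (\<lambda>x. LINT t:{a..x}|lborel. f t)"
proof (rule continuous_on_eq)
  show "continuous_on {a..b} (\<lambda>x. integral {a..x} f)"
    by (rule indefinite_integral_continuous_1[OF set_borel_integral_eq_integral(1)[OF assms]])
  show "integral {a..x} f = (LINT t:{a..x}|lborel. f t)" if "x \<in> {a..b}" for x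
    by (rule set_borel_integral_eq_integral(2)[symmetric], rule set_integrable_subset[OF assms])
       (use that in auto)
qed

lemma continuous_on_AE_zero_imp_zero:
  fixes f :: "real \<Rightarrow> 'a::real_normed_vector"
  assumes "a < b" and cont: "continuous_on {a..b} f"
    and ae: "AE x in lborel. x \<in> {a..b} \<longrightarrow> f x = 0" and x: "x \<in> {a..b}"
  shows "f x = 0"
proof -
  let ?Z = "{y \<in> {a..b}. f y = 0}"
  have closed: "closed ?Z"
    by (rule continuous_closed_preimage_constant[OF cont closed_atLeastAtMost])
  have "AE y \<in> {a<..<b} in lebesgue. y \<in> ?Z"
    using AE_completion[OF ae] by eventually_elim auto
  then have "{a<..<b} \<subseteq> ?Z"
    using mem_closed_if_AE_lebesgue_open[OF open_greaterThanLessThan closed] by blast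
  then have "closure {a<..<b} \<subseteq> ?Z"
    by (rule closure_minimal[OF _ closed])
  then show ?thesis using x \<open>a < b\<close> by auto
qed

lemma linear_integral_equation_zero:
  fixes d :: "real \<Rightarrow> complex"
  assumes cont: "continuous_on {a..b} d"
    and eq: "\<And>x. x \<in> {a..b} \<Longrightarrow> d x = c * integral {a..x} d"
    and x: "x \<in> {a..b}"
  shows "d x = 0"
proof -
  define h where "h u = exp (- (complex_of_real u * c)) * d u" for u
  have "(h has_vector_derivative 0) (at y within {a..b})" if y: "y \<in> {a..b}" for y
  proof -
    have "(d has_vector_derivative c * d y) (at y within {a..b})"
    proof (rule has_vector_derivative_transform[OF y eq])
      show "((\<lambda>u. c * integral {a..u} d) has_vector_derivative c * d y) (at y within {a..b})"
        by (intro has_vector_derivative_mult_right integral_has_vector_derivative cont y)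
    qed
    moreover have "((\<lambda>u. exp (- (complex_of_real u * c))) has_vector_derivative
        - c * exp (- (complex_of_real y * c))) (at y within {a..b})"
    proof -
      have "((\<lambda>z. exp (- (z * c))) has_field_derivative exp (- (of_real y * c)) * (- c)) (at (of_real y))"
        by (auto intro!: derivative_eq_intros)
      from has_vector_derivative_real_field[OF this] show ?thesis
        by (simp add: algebra_simps)
    qed
    ultimately show ?thesis
      unfolding h_def using has_vector_derivative_mult by (fastforce simp: algebra_simps)
  qed
  then obtain k where k: "\<And>y. y \<in> {a..b} \<Longrightarrow> h y = k"
    using has_vector_derivative_zero_constant[of "{a..b}" h] by auto
  have a: "a \<in> {a..b}" using x by simp
  have "h a = 0" using eq[OF a] by (simp add: h_def)
  then have "h x = 0" using k[OF a] k[OF x] by simp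
  then show ?thesis by (simp add: h_def)
qed

lemma set_integral_triangle_swap:
  fixes k u :: "real \<Rightarrow> complex"
  assumes [measurable]: "k \<in> borel_measurable borel" "u \<in> borel_measurable borel"
    and k_bound: "\<And>t. norm (k t) \<le> B" and u: "integrable lborel u"
  shows "(LINT t:{0..x}|lborel. (LINT y:{0..t}|lborel. k (t - y) * u y))
       = (LINT y:{0..x}|lborel. u y * (LINT t:{y..x}|lborel. k (t - y)))"
proof -
  define F where "F t y = (if 0 \<le> y \<and> y \<le> t \<and> t \<le> x then k (t - y) * u y else 0)" for t y
  define G where "G p = B * (indicator {0..x} (fst p) * norm (u (snd p)))" for p :: "real \<times> real"
  have "integrable (lborel \<Otimes>\<^sub>M lborel) (\<lambda>p::real \<times> real. indicator {0..x} (fst p) * norm (u (snd p)))"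
  proof (rule lborel_pair.Fubini_integrable)
    have "integrable lborel (\<lambda>t. indicator {0..x} t * (\<integral>y. norm (u y) \<partial>lborel))"
      using borel_integrable_atLeastAtMost'[of 0 x "\<lambda>_. 1::real"]
      by (intro integrable_mult_left) (simp add: set_integrable_def)
    then show "integrable lborel (\<lambda>t. \<integral>y. norm (indicator {0..x} (fst (t, y)) * norm (u (snd (t, y))) :: real) \<partial>lborel)"
      by (simp add: indicator_def)
    show "AE t in lborel. integrable lborel (\<lambda>y. indicator {0..x} (fst (t, y)) * norm (u (snd (t, y))) :: real)"
      using u by (auto intro!: integrable_mult_right)
  qed measurable
  then have "integrable (lborel \<Otimes>\<^sub>M lborel) G"
    unfolding G_def by (rule integrable_mult_right)
  then have F_int: "integrable (lborel \<Otimes>\<^sub>M lborel) (case_prod F)"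
  proof (rule Bochner_Integration.integrable_bound)
    show "case_prod F \<in> borel_measurable (lborel \<Otimes>\<^sub>M lborel)"
      unfolding F_def by measurable
    show "AE p in lborel \<Otimes>\<^sub>M lborel. norm (case_prod F p) \<le> norm (G p)"
      using k_bound[THEN order_trans[OF norm_ge_zero]]
      by (intro AE_I2) (auto simp: F_def G_def indicator_def norm_mult intro!: mult_right_mono k_bound)
  qed
  have "(LINT t:{0..x}|lborel. (LINT y:{0..t}|lborel. k (t - y) * u y)) = (\<integral>t. (\<integral>y. F t y \<partial>lborel) \<partial>lborel)"
    unfolding set_lebesgue_integral_def
    by (rule Bochner_Integration.integral_cong[OF refl], subst integral_scaleR_right[symmetric],
        rule Bochner_Integration.integral_cong) (auto simp: F_def indicator_def)
  also have "\<dots> = (\<integral>y. (\<integral>t. F t y \<partial>lborel) \<partial>lborel)"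
    using lborel_pair.Fubini_integral[OF F_int] by simp
  also have "\<dots> = (LINT y:{0..x}|lborel. u y * (LINT t:{y..x}|lborel. k (t - y)))"
    unfolding set_lebesgue_integral_def
    by (rule Bochner_Integration.integral_cong[OF refl], subst integral_mult_right_zero[symmetric],
        subst integral_scaleR_right[symmetric], rule Bochner_Integration.integral_cong)
       (auto simp: F_def indicator_def)
  finally show ?thesis .
qed

section \<open>The Duhamel integral\<close>

definition wave :: "real \<Rightarrow> real \<Rightarrow> complex" where
  "wave lam t = exp (- \<i> * complex_of_real (lam * t))"

definition duhamel :: "(real \<Rightarrow> complex) \<Rightarrow> real \<Rightarrow> real \<Rightarrow> complex" where
  "duhamel v lam x = (LINT y:{0..x}|lborel. wave lam (x - y) * v y)"

lemma continuous_on_wave [continuous_intros]: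
  "continuous_on S f \<Longrightarrow> continuous_on S (\<lambda>t. wave lam (f t))"
  unfolding wave_def by (intro continuous_intros)

lemma borel_measurable_wave [measurable]: "wave lam \<in> borel_measurable borel"
  unfolding wave_def by measurable

lemma norm_wave [simp]: "norm (wave lam t) = 1"
  unfolding wave_def by (simp del: norm_exp_eq_Re add: norm_exp_eq_Re)

lemma wave_0 [simp]: "wave lam 0 = 1"
  by (simp add: wave_def)

lemma wave_diff: "wave lam (x - y) = wave lam x * wave lam (- y)"
  unfolding wave_def by (simp add: algebra_simps flip: exp_add)

lemma has_vector_derivative_wave:
  "((\<lambda>t. wave lam (t - y)) has_vector_derivative - \<i> * lam * wave lam (t - y)) (at t within S)"
proof -
  have "((\<lambda>z. exp (- \<i> * (lam * (z - y)))) has_field_derivative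
       exp (- \<i> * (lam * (t - y))) * (- \<i> * lam)) (at t)"
    by (auto intro!: derivative_eq_intros)
  from has_vector_derivative_real_field[OF this] show ?thesis
    by (simp add: wave_def algebra_simps)
qed

lemma set_integral_wave:
  assumes "y \<le> x"
  shows "- \<i> * lam * (LINT t:{y..x}|lborel. wave lam (t - y)) = wave lam (x - y) - 1"
proof -
  have "- \<i> * lam * (LINT t:{y..x}|lborel. wave lam (t - y)) = (LINT t:{y..x}|lborel. - \<i> * lam * wave lam (t - y))"
    by (rule set_integral_mult_right[symmetric])
  also have "\<dots> = wave lam (x - y) - wave lam (y - y)"
    unfolding set_lebesgue_integral_def
    by (rule integral_FTC_atLeastAtMost[OF assms has_vector_derivative_wave])
       (intro continuous_intros continuous_on_id)
  finally show ?thesis by simp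
qed

lemma vhat_eq_duhamel: "vhat v lam = (LINT x:{0..1}|lborel. duhamel v lam x * cnj (v x))"
  unfolding vhat_def duhamel_def wave_def ..

context
  fixes v :: "real \<Rightarrow> complex" and lam :: real
  assumes v: "L2_01 v"
begin

lemma set_integrable_bounded_mult_v:
  assumes S: "S \<subseteq> {0..1}" "S \<in> sets borel" and [measurable]: "h \<in> borel_measurable borel"
    and B: "\<And>x. x \<in> S \<Longrightarrow> norm (h x) \<le> B"
  shows "set_integrable lborel S (\<lambda>y. h y * v y)"
  by (rule L2_01_set_integrable_bounded_mult[OF v S _ B]) (use S in \<open>simp add: set_borel_measurable_def\<close>)

lemma set_integrable_v: "x \<le> 1 \<Longrightarrow> set_integrable lborel {0..x} v"
  using set_integrable_bounded_mult_v[of "{0..x}" "\<lambda>_. 1" 1] by simp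

lemma set_integrable_wave_mult_v: "x \<le> 1 \<Longrightarrow> set_integrable lborel {0..x} (\<lambda>y. wave lam (c - y) * v y)"
  by (rule set_integrable_bounded_mult_v[of _ _ 1]) auto

lemma duhamel_eq: "duhamel v lam x = wave lam x * (LINT y:{0..x}|lborel. wave lam (- y) * v y)"
  unfolding duhamel_def wave_diff by (simp add: mult.assoc)

lemma continuous_on_duhamel: "continuous_on {0..1} (duhamel v lam)"
proof -
  have "continuous_on {0..1} (\<lambda>x. LINT y:{0..x}|lborel. wave lam (- y) * v y)"
    by (intro continuous_on_indefinite_set_integral set_integrable_bounded_mult_v[of _ _ 1]) auto
  then show ?thesis
    unfolding duhamel_eq by (intro continuous_intros continuous_on_id)
qed

lemma duhamel_0 [simp]: "duhamel v lam 0 = 0"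
  using set_borel_integral_eq_integral(2)[OF set_integrable_wave_mult_v[of 0 0]]
  by (simp add: duhamel_def)

lemma duhamel_1: "duhamel v lam 1 = wave lam 1 * vtilde v lam"
  unfolding duhamel_eq vtilde_def by (simp add: wave_def)

lemma duhamel_integral_eq:
  assumes x: "x \<in> {0..1}"
  shows "duhamel v lam x = (LINT t:{0..x}|lborel. - \<i> * lam * duhamel v lam t + v t)"
proof -
  define v0 where "v0 y = indicator {0..1} y *\<^sub>R v y" for y
  have v0_meas: "v0 \<in> borel_measurable borel"
    using L2_01_set_borel_measurable[OF v] unfolding v0_def set_borel_measurable_def .
  have v0_int: "integrable lborel v0"
    using L2_01_set_integrable[OF v] unfolding v0_def set_integrable_def .
  have "(LINT t:{0..x}|lborel. duhamel v lam t) = (LINT t:{0..x}|lborel. (LINT y:{0..t}|lborel. wave lam (t - y) * v0 y))"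
    unfolding duhamel_def
    by (rule set_lebesgue_integral_cong) (use x in \<open>auto intro!: set_lebesgue_integral_cong simp: v0_def\<close>)
  also have "\<dots> = (LINT y:{0..x}|lborel. v0 y * (LINT t:{y..x}|lborel. wave lam (t - y)))"
    by (rule set_integral_triangle_swap[where B = 1, OF borel_measurable_wave v0_meas _ v0_int]) simp
  finally have "- \<i> * lam * (LINT t:{0..x}|lborel. duhamel v lam t)
      = (LINT y:{0..x}|lborel. v0 y * (- \<i> * lam * (LINT t:{y..x}|lborel. wave lam (t - y))))"
    by (simp flip: set_integral_mult_right add: algebra_simps)
  also have "\<dots> = (LINT y:{0..x}|lborel. wave lam (x - y) * v y - v y)"
  proof (rule set_lebesgue_integral_cong)
    show "\<forall>y. y \<in> {0..x} \<longrightarrow>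
        v0 y * (- \<i> * lam * (LINT t:{y..x}|lborel. wave lam (t - y))) = wave lam (x - y) * v y - v y"
    proof (intro allI impI)
      fix y assume y: "y \<in> {0..x}"
      have "- \<i> * lam * (LINT t:{y..x}|lborel. wave lam (t - y)) = wave lam (x - y) - 1"
        by (rule set_integral_wave) (use y in simp)
      then show "v0 y * (- \<i> * lam * (LINT t:{y..x}|lborel. wave lam (t - y))) = wave lam (x - y) * v y - v y"
        using x y by (simp only:) (simp add: v0_def algebra_simps)
    qed
  qed simp
  also have "\<dots> = duhamel v lam x - (LINT y:{0..x}|lborel. v y)"
    unfolding duhamel_def
    by (rule set_integral_diff(2)) (use x in \<open>auto intro!: set_integrable_wave_mult_v set_integrable_v\<close>)
  finally have FTC: "- \<i> * lam * (LINT t:{0..x}|lborel. duhamel v lam t)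
      = duhamel v lam x - (LINT y:{0..x}|lborel. v y)" .
  have "set_integrable lborel {0..x} (duhamel v lam)"
    by (rule borel_integrable_atLeastAtMost', rule continuous_on_subset[OF continuous_on_duhamel])
       (use x in auto)
  then have "(LINT t:{0..x}|lborel. - \<i> * lam * duhamel v lam t + v t)
      = - \<i> * lam * (LINT t:{0..x}|lborel. duhamel v lam t) + (LINT t:{0..x}|lborel. v t)"
    using x by (simp add: set_integral_add set_integrable_v set_integral_mult_right)
  then show ?thesis
    using FTC by (simp add: algebra_simps)
qed

end

section \<open>Eigenfunctions\<close>

definition eigen_candidate :: "(real \<Rightarrow> complex) \<Rightarrow> real \<Rightarrow> complex \<Rightarrow> complex \<Rightarrow> real \<Rightarrow> complex" where
  "eigen_candidate v lam C1 C2 x = C1 * wave lam x - \<i> * C2 * duhamel v lam x"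

definition eigen_system :: "(real \<Rightarrow> complex) \<Rightarrow> real \<Rightarrow> real \<Rightarrow> complex \<Rightarrow> complex \<Rightarrow> bool" where
  "eigen_system v \<alpha> lam C1 C2 \<longleftrightarrow>
     C1 * (exp (- \<i> * complex_of_real lam) - exp (\<i> * complex_of_real \<alpha>)
           + \<i> * exp (\<i> * complex_of_real \<alpha>) * cnj (vtilde v lam))
     - \<i> * C2 * (exp (- \<i> * complex_of_real lam) * vtilde v lam
           + \<i> * exp (\<i> * complex_of_real \<alpha>) * vhat v lam) = 0 \<and>
     C1 * (2 * \<i> + cnj (vtilde v lam)) + \<i> * C2 * (2 - vhat v lam) = 0"

lemma nontrivial_solution_2x2_iff:
  fixes a b c d :: "'a::field"
  shows "(\<exists>x y. (x, y) \<noteq> (0, 0) \<and> a * x + b * y = 0 \<and> c * x + d * y = 0) \<longleftrightarrow> a * d - b * c = 0"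
proof
  assume "\<exists>x y. (x, y) \<noteq> (0, 0) \<and> a * x + b * y = 0 \<and> c * x + d * y = 0"
  then obtain x y where nz: "(x, y) \<noteq> (0, 0)" and e1: "a * x + b * y = 0" and e2: "c * x + d * y = 0"
    by blast
  have "(a * d - b * c) * x = d * (a * x + b * y) - b * (c * x + d * y)"
    and "(a * d - b * c) * y = a * (c * x + d * y) - c * (a * x + b * y)"
    by (simp_all add: algebra_simps)
  with e1 e2 nz show "a * d - b * c = 0" by auto
next
  assume det: "a * d - b * c = 0"
  consider "(a, b) \<noteq> (0, 0)" | "(c, d) \<noteq> (0, 0)" | "a = 0" "b = 0" "c = 0" "d = 0"
    by auto
  then show "\<exists>x y. (x, y) \<noteq> (0, 0) \<and> a * x + b * y = 0 \<and> c * x + d * y = 0"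
  proof cases
    case 1
    with det show ?thesis
      by (intro exI[of _ b] exI[of _ "- a"]) (auto simp: algebra_simps)
  next
    case 2
    with det show ?thesis
      by (intro exI[of _ d] exI[of _ "- c"]) (auto simp: algebra_simps)
  next
    case 3
    then show ?thesis by (intro exI[of _ 1] exI[of _ 0]) simp
  qed
qed

lemma eigen_system_solvable_iff:
  "(\<exists>C1 C2. (C1, C2) \<noteq> (0, 0) \<and> eigen_system v \<alpha> lam C1 C2) \<longleftrightarrow> chi v \<alpha> lam = 0"
proof -
  define a where "a = exp (- \<i> * complex_of_real lam) - exp (\<i> * complex_of_real \<alpha>)
    + \<i> * exp (\<i> * complex_of_real \<alpha>) * cnj (vtilde v lam)"
  define b where "b = exp (- \<i> * complex_of_real lam) * vtilde v lam
    + \<i> * exp (\<i> * complex_of_real \<alpha>) * vhat v lam"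
  define c where "c = 2 * \<i> + cnj (vtilde v lam)"
  define d where "d = 2 - vhat v lam"
  have "eigen_system v \<alpha> lam C1 C2 \<longleftrightarrow> a * C1 + (- \<i> * b) * C2 = 0 \<and> c * C1 + (\<i> * d) * C2 = 0"
    for C1 C2
    unfolding eigen_system_def a_def b_def c_def d_def by (simp add: algebra_simps)
  moreover have "chi v \<alpha> lam = a * (\<i> * d) - (- \<i> * b) * c"
    unfolding chi_def a_def b_def c_def d_def by (simp add: algebra_simps)
  ultimately show ?thesis
    using nontrivial_solution_2x2_iff[of a "- \<i> * b" c "\<i> * d"] by simp
qed

lemma W21_deriv_continuous_on:
  assumes "W21_deriv \<psi> g"
  shows "continuous_on {0..1} \<psi>"
proof (rule continuous_on_eq)
  have "L2_01 g" and rep: "\<And>x. x \<in> {0..1} \<Longrightarrow> \<psi> x = \<psi> 0 + (LINT t:{0..x}|lborel. g t)"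
    using assms unfolding W21_deriv_def by blast+
  then show "continuous_on {0..1} (\<lambda>x. \<psi> 0 + (LINT t:{0..x}|lborel. g t))"
    by (intro continuous_on_add continuous_on_const continuous_on_indefinite_set_integral
        L2_01_set_integrable)
  show "\<psi> 0 + (LINT t:{0..x}|lborel. g t) = \<psi> x" if "x \<in> {0..1}" for x
    using rep[OF that] by simp
qed

context
  fixes v :: "real \<Rightarrow> complex" and lam :: real
  assumes v: "L2_01 v"
begin

lemma continuous_on_eigen_candidate: "continuous_on {0..1} (eigen_candidate v lam C1 C2)"
  unfolding eigen_candidate_def[abs_def]
  by (intro continuous_intros continuous_on_duhamel[OF v] continuous_on_id)

lemma eigen_candidate_0 [simp]: "eigen_candidate v lam C1 C2 0 = C1"
  by (simp add: eigen_candidate_def duhamel_0[OF v])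

lemma eigen_candidate_1:
  "eigen_candidate v lam C1 C2 1 = exp (- \<i> * lam) * (C1 - \<i> * C2 * vtilde v lam)"
  by (simp add: eigen_candidate_def duhamel_1[OF v] wave_def algebra_simps)

lemma eigen_candidate_integral_eq:
  assumes x: "x \<in> {0..1}"
  shows "eigen_candidate v lam C1 C2 x
    = C1 + (LINT t:{0..x}|lborel. - \<i> * lam * eigen_candidate v lam C1 C2 t - \<i> * C2 * v t)"
proof -
  have wave_int: "set_integrable lborel {0..x} (\<lambda>t. - \<i> * lam * wave lam t)"
    by (rule borel_integrable_atLeastAtMost') (intro continuous_intros continuous_on_id)
  have duhamel_int: "set_integrable lborel {0..x} (\<lambda>t. - \<i> * lam * duhamel v lam t + v t)"
    using x by (intro set_integral_add set_integrable_mult_right set_integrable_v[OF v]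
        borel_integrable_atLeastAtMost' continuous_on_subset[OF continuous_on_duhamel[OF v]]) auto
  have "(LINT t:{0..x}|lborel. - \<i> * lam * eigen_candidate v lam C1 C2 t - \<i> * C2 * v t)
      = (LINT t:{0..x}|lborel. C1 * (- \<i> * lam * wave lam t) + (- \<i> * C2) * (- \<i> * lam * duhamel v lam t + v t))"
    by (rule set_lebesgue_integral_cong) (auto simp: eigen_candidate_def algebra_simps)
  also have "\<dots> = C1 * (LINT t:{0..x}|lborel. - \<i> * lam * wave lam t)
      + (- \<i> * C2) * (LINT t:{0..x}|lborel. - \<i> * lam * duhamel v lam t + v t)"
    by (simp only: set_integral_add(2)[OF set_integrable_mult_right[OF wave_int]
          set_integrable_mult_right[OF duhamel_int]] set_integral_mult_right)
  also have "(LINT t:{0..x}|lborel. - \<i> * lam * wave lam t) = wave lam x - 1"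
    using set_integral_wave[of 0 x lam] x by (subst set_integral_mult_right) simp
  also have "(LINT t:{0..x}|lborel. - \<i> * lam * duhamel v lam t + v t) = duhamel v lam x"
    by (rule duhamel_integral_eq[OF v x, symmetric])
  finally show ?thesis
    by (simp add: eigen_candidate_def algebra_simps)
qed

lemma W21_deriv_eigen_candidate:
  "W21_deriv (eigen_candidate v lam C1 C2) (\<lambda>t. - \<i> * lam * eigen_candidate v lam C1 C2 t - \<i> * C2 * v t)"
proof -
  have "(\<lambda>t. - \<i> * lam * eigen_candidate v lam C1 C2 t - \<i> * C2 * v t)
      = (\<lambda>t. (- \<i> * lam) * eigen_candidate v lam C1 C2 t + (- \<i> * C2) * v t)"
    by (simp add: fun_eq_iff)
  moreover have "L2_01 (\<lambda>t. (- \<i> * lam) * eigen_candidate v lam C1 C2 t + (- \<i> * C2) * v t)"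
    by (intro L2_01_add L2_01_cmult continuous_on_imp_L2_01 continuous_on_eigen_candidate v)
  ultimately show ?thesis
    unfolding W21_deriv_def using eigen_candidate_integral_eq by simp
qed

lemma ip01_eigen_candidate:
  "ip01 (eigen_candidate v lam C1 C2) v = C1 * cnj (vtilde v lam) - \<i> * C2 * vhat v lam"
proof -
  have cnj_v: "L2_01 (\<lambda>x. cnj (v x))"
    by (rule L2_01_cnj[OF v])
  have wave_int: "set_integrable lborel {0..1} (\<lambda>x. wave lam x * cnj (v x))"
    by (rule L2_01_set_integrable_bounded_mult[OF cnj_v, of _ _ 1]) (auto simp: set_borel_measurable_def)
  obtain B where B: "\<forall>x\<in>{0..1}. norm (duhamel v lam x) \<le> B"
    using compact_imp_bounded[OF compact_continuous_image[OF continuous_on_duhamel[OF v] compact_Icc]]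
    by (auto simp: bounded_iff)
  have duhamel_int: "set_integrable lborel {0..1} (\<lambda>x. duhamel v lam x * cnj (v x))"
    by (rule L2_01_set_integrable_bounded_mult[OF cnj_v, of _ _ B])
       (use B in \<open>auto simp: set_borel_measurable_def
          intro!: borel_measurable_continuous_on_indicator continuous_on_duhamel[OF v]\<close>)
  have "ip01 (eigen_candidate v lam C1 C2) v
      = (LINT x:{0..1}|lborel. C1 * (wave lam x * cnj (v x)) + (- \<i> * C2) * (duhamel v lam x * cnj (v x)))"
    unfolding ip01_def by (rule set_lebesgue_integral_cong) (auto simp: eigen_candidate_def algebra_simps)
  also have "\<dots> = C1 * (LINT x:{0..1}|lborel. wave lam x * cnj (v x))
      + (- \<i> * C2) * (LINT x:{0..1}|lborel. duhamel v lam x * cnj (v x))"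
    by (simp only: set_integral_add(2)[OF set_integrable_mult_right[OF wave_int]
          set_integrable_mult_right[OF duhamel_int]] set_integral_mult_right)
  also have "(LINT x:{0..1}|lborel. wave lam x * cnj (v x)) = cnj (vtilde v lam)"
    unfolding vtilde_def set_lebesgue_integral_cnj
    by (rule set_lebesgue_integral_cong) (auto simp: wave_def exp_cnj)
  finally show ?thesis
    by (simp add: vhat_eq_duhamel)
qed

lemma eq_eigen_candidate_if_integral_eq:
  assumes cont: "continuous_on {0..1} \<psi>"
    and eq: "\<And>x. x \<in> {0..1} \<Longrightarrow> \<psi> x = C1 + (LINT t:{0..x}|lborel. - \<i> * lam * \<psi> t - \<i> * C2 * v t)"
    and x: "x \<in> {0..1}"
  shows "\<psi> x = eigen_candidate v lam C1 C2 x"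
proof -
  let ?\<phi> = "eigen_candidate v lam C1 C2"
  have integrable: "set_integrable lborel {0..x} (\<lambda>t. - \<i> * lam * f t - \<i> * C2 * v t)"
    if "continuous_on {0..1} f" "x \<in> {0..1}" for f x
    using that by (intro set_integral_diff set_integrable_mult_right set_integrable_v[OF v]
        borel_integrable_atLeastAtMost' continuous_on_subset[OF that(1)]) auto
  have diff_eq: "\<psi> x - ?\<phi> x = (- \<i> * lam) * integral {0..x} (\<lambda>t. \<psi> t - ?\<phi> t)"
    if x: "x \<in> {0..1}" for x
  proof -
    have "\<psi> x - ?\<phi> x = (LINT t:{0..x}|lborel. - \<i> * lam * \<psi> t - \<i> * C2 * v t)
        - (LINT t:{0..x}|lborel. - \<i> * lam * ?\<phi> t - \<i> * C2 * v t)"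
      using eq[OF x] eigen_candidate_integral_eq[OF x] by simp
    also have "\<dots> = (LINT t:{0..x}|lborel. (- \<i> * lam * \<psi> t - \<i> * C2 * v t)
        - (- \<i> * lam * ?\<phi> t - \<i> * C2 * v t))"
      by (rule set_integral_diff(2)[symmetric, OF integrable[OF cont x]
          integrable[OF continuous_on_eigen_candidate x]])
    also have "\<dots> = (LINT t:{0..x}|lborel. (- \<i> * lam) * (\<psi> t - ?\<phi> t))"
      by (rule set_lebesgue_integral_cong) (auto simp: algebra_simps)
    also have "\<dots> = (- \<i> * lam) * integral {0..x} (\<lambda>t. \<psi> t - ?\<phi> t)"
      using x by (simp add: set_integral_mult_right set_borel_integral_eq_integral(2)
          borel_integrable_atLeastAtMost' continuous_on_subset[OF cont]
          continuous_on_subset[OF continuous_on_eigen_candidate] continuous_intros)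
    finally show ?thesis .
  qed
  have "\<psi> x - ?\<phi> x = 0"
    by (rule linear_integral_equation_zero[OF _ diff_eq x])
       (intro continuous_on_diff cont continuous_on_eigen_candidate)
  then show ?thesis by simp
qed

lemma eigen_system_iff_eigen_candidate:
  "eigen_system v \<alpha> lam C1 C2 \<longleftrightarrow>
     eigen_candidate v lam C1 C2 1 = exp (\<i> * \<alpha>) *
       (eigen_candidate v lam C1 C2 0 - \<i> * ip01 (eigen_candidate v lam C1 C2) v) \<and>
     eigen_candidate v lam C1 C2 0 - \<i> / 2 * ip01 (eigen_candidate v lam C1 C2) v = - C2"
proof -
  have "exp (- \<i> * lam) * (C1 - \<i> * C2 * vtilde v lam)
        - exp (\<i> * \<alpha>) * (C1 - \<i> * (C1 * cnj (vtilde v lam) - \<i> * C2 * vhat v lam))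
      = C1 * (exp (- \<i> * lam) - exp (\<i> * \<alpha>) + \<i> * exp (\<i> * \<alpha>) * cnj (vtilde v lam))
        - \<i> * C2 * (exp (- \<i> * lam) * vtilde v lam + \<i> * exp (\<i> * \<alpha>) * vhat v lam)"
    by (simp add: algebra_simps)
  then have boundary: "exp (- \<i> * lam) * (C1 - \<i> * C2 * vtilde v lam)
        = exp (\<i> * \<alpha>) * (C1 - \<i> * (C1 * cnj (vtilde v lam) - \<i> * C2 * vhat v lam))
      \<longleftrightarrow> C1 * (exp (- \<i> * lam) - exp (\<i> * \<alpha>) + \<i> * exp (\<i> * \<alpha>) * cnj (vtilde v lam))
        - \<i> * C2 * (exp (- \<i> * lam) * vtilde v lam + \<i> * exp (\<i> * \<alpha>) * vhat v lam) = 0"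
    by (metis eq_iff_diff_eq_0)
  have "C1 * (2 * \<i> + cnj (vtilde v lam)) + \<i> * C2 * (2 - vhat v lam)
      = 2 * \<i> * (C1 - \<i> / 2 * (C1 * cnj (vtilde v lam) - \<i> * C2 * vhat v lam) + C2)"
    by (simp add: algebra_simps)
  then have shift: "C1 - \<i> / 2 * (C1 * cnj (vtilde v lam) - \<i> * C2 * vhat v lam) = - C2
      \<longleftrightarrow> C1 * (2 * \<i> + cnj (vtilde v lam)) + \<i> * C2 * (2 - vhat v lam) = 0"
    by (simp add: eq_neg_iff_add_eq_0)
  show ?thesis
    unfolding eigen_system_def eigen_candidate_0 eigen_candidate_1 ip01_eigen_candidate
      boundary shift ..
qed

lemma eigen_candidate_not_AE_zero:
  assumes nz: "(C1, C2) \<noteq> (0, 0)"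
    and eq: "C1 * (2 * \<i> + cnj (vtilde v lam)) + \<i> * C2 * (2 - vhat v lam) = 0"
  shows "\<not> (AE x in lborel. x \<in> {0..1} \<longrightarrow> eigen_candidate v lam C1 C2 x = 0)"
proof
  assume "AE x in lborel. x \<in> {0..1} \<longrightarrow> eigen_candidate v lam C1 C2 x = 0"
  then have zero: "eigen_candidate v lam C1 C2 x = 0" if "x \<in> {0..1}" for x
    using continuous_on_AE_zero_imp_zero[OF _ continuous_on_eigen_candidate _ that] by simp
  then have "C1 = 0"
    using eigen_candidate_0 by fastforce
  with nz have "C2 \<noteq> 0" by simp
  with zero \<open>C1 = 0\<close> have duhamel_zero: "duhamel v lam x = 0" if "x \<in> {0..1}" for x
    using that by (auto simp: eigen_candidate_def)
  have "vhat v lam = (LINT x:{0..1::real}|lborel. 0)"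
    unfolding vhat_eq_duhamel by (rule set_lebesgue_integral_cong) (auto simp: duhamel_zero)
  then have "vhat v lam = 0" by simp
  with eq \<open>C1 = 0\<close> \<open>C2 \<noteq> 0\<close> show False by simp
qed

lemma eigenfunA_eigen_candidate:
  assumes nz: "(C1, C2) \<noteq> (0, 0)" and sys: "eigen_system v \<alpha> lam C1 C2"
  shows "eigenfunA v \<alpha> lam (eigen_candidate v lam C1 C2)"
proof -
  let ?\<phi> = "eigen_candidate v lam C1 C2"
  have bc: "?\<phi> 1 = exp (\<i> * \<alpha>) * (?\<phi> 0 - \<i> * ip01 ?\<phi> v)"
    and shift: "?\<phi> 0 - \<i> / 2 * ip01 ?\<phi> v = - C2"
    using sys unfolding eigen_system_iff_eigen_candidate by blast+
  have "\<not> (AE x in lborel. x \<in> {0..1} \<longrightarrow> ?\<phi> x = 0)"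
    using sys by (intro eigen_candidate_not_AE_zero nz) (simp add: eigen_system_def)
  moreover have "\<i> * (- \<i> * lam * ?\<phi> x - \<i> * C2 * v x) + v x * (?\<phi> 0 - \<i> / 2 * ip01 ?\<phi> v) = lam * ?\<phi> x"
    for x
    unfolding shift by (simp add: algebra_simps)
  ultimately show ?thesis
    unfolding eigenfunA_def domA_def W21_def
    using W21_deriv_eigen_candidate bc by blast
qed

lemma eigen_equation_integral_form:
  fixes \<psi> g :: "real \<Rightarrow> complex"
  assumes W: "W21_deriv \<psi> g"
    and eq: "AE x in lborel. x \<in> {0..1} \<longrightarrow> \<i> * g x - C2 * v x = lam * \<psi> x"
    and x: "x \<in> {0..1}"
  shows "\<psi> x = \<psi> 0 + (LINT t:{0..x}|lborel. - \<i> * lam * \<psi> t - \<i> * C2 * v t)"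
proof -
  have g: "L2_01 g" and rep: "\<psi> x = \<psi> 0 + (LINT t:{0..x}|lborel. g t)"
    using W x unfolding W21_deriv_def by blast+
  have "(LINT t:{0..x}|lborel. g t) = (LINT t:{0..x}|lborel. - \<i> * lam * \<psi> t - \<i> * C2 * v t)"
  proof (rule set_lebesgue_integral_cong_AE_set_measurable)
    show "set_borel_measurable lborel {0..x} g"
      using x by (intro set_integrable_imp_set_borel_measurable
          set_integrable_subset[OF L2_01_set_integrable[OF g]]) auto
    show "set_borel_measurable lborel {0..x} (\<lambda>t. - \<i> * lam * \<psi> t - \<i> * C2 * v t)"
      using x by (intro set_integrable_imp_set_borel_measurable set_integral_diff
          set_integrable_mult_right set_integrable_v[OF v] borel_integrable_atLeastAtMost'
          continuous_on_subset[OF W21_deriv_continuous_on[OF W]]) auto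
    have solve: "g t = - \<i> * lam * \<psi> t - \<i> * C2 * v t" if "\<i> * g t - C2 * v t = lam * \<psi> t" for t
    proof -
      have "g t = - \<i> * (\<i> * g t - C2 * v t) - \<i> * C2 * v t" by (simp add: algebra_simps)
      then show ?thesis unfolding that by (simp add: algebra_simps)
    qed
    show "AE t in lborel. t \<in> {0..x} \<longrightarrow> g t = - \<i> * lam * \<psi> t - \<i> * C2 * v t"
      using eq by eventually_elim (use x solve in auto)
  qed
  then show ?thesis using rep by simp
qed

lemma eigenfunA_imp_eigen_system:
  assumes "eigenfunA v \<alpha> lam \<psi>"
  obtains C1 C2 where "(C1, C2) \<noteq> (0, 0)" "eigen_system v \<alpha> lam C1 C2"
proof -
  obtain g where dom: "domA v \<alpha> \<psi>" and nonzero: "\<not> (AE x in lborel. x \<in> {0..1} \<longrightarrow> \<psi> x = 0)"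
    and W: "W21_deriv \<psi> g"
    and eq: "AE x in lborel. x \<in> {0..1} \<longrightarrow> \<i> * g x + v x * (\<psi> 0 - \<i> / 2 * ip01 \<psi> v) = lam * \<psi> x"
    using assms unfolding eigenfunA_def by blast
  \<comment> \<open>C1 is kept abstract: the simplifier would loop on psi x = eigen_candidate v lam (psi 0) C2 x.\<close>
  define C1 where "C1 = \<psi> 0"
  define C2 where "C2 = - (\<psi> 0 - \<i> / 2 * ip01 \<psi> v)"
  let ?\<phi> = "eigen_candidate v lam C1 C2"
  have "AE x in lborel. x \<in> {0..1} \<longrightarrow> \<i> * g x - C2 * v x = lam * \<psi> x"
    using eq by eventually_elim (simp add: C2_def algebra_simps)
  then have \<psi>: "\<psi> x = ?\<phi> x" if "x \<in> {0..1}" for x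
    unfolding C1_def using that
    by (intro eq_eigen_candidate_if_integral_eq[OF W21_deriv_continuous_on[OF W]]
        eigen_equation_integral_form[OF W])
  have ip: "ip01 ?\<phi> v = ip01 \<psi> v"
    unfolding ip01_def by (rule set_lebesgue_integral_cong) (auto simp: \<psi>)
  show ?thesis
  proof
    show "(C1, C2) \<noteq> (0, 0)"
    proof
      assume "(C1, C2) = (0, 0)"
      then have "\<psi> x = 0" if "x \<in> {0..1}" for x
        using \<psi>[OF that] by (simp add: eigen_candidate_def)
      with nonzero show False by simp
    qed
    show "eigen_system v \<alpha> lam C1 C2"
      unfolding eigen_system_iff_eigen_candidate eigen_candidate_0 \<psi>[of 1, symmetric, simplified] ip
      using dom by (simp add: domA_def C1_def C2_def)
  qed
qed

end

theorem theorem6p1: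
  fixes v :: "real \<Rightarrow> complex" and \<alpha> :: real
  assumes hv: "L2_01 v"
    and h\<alpha>: "0 \<le> \<alpha>" "\<alpha> < 2 * pi"
  shows "(\<forall>lam::real. eigenvalueA v \<alpha> lam \<longleftrightarrow> chi v \<alpha> lam = 0)
    \<and> (\<forall>(lam::real) (C1::complex) (C2::complex). chi v \<alpha> lam = 0 \<longrightarrow> (C1, C2) \<noteq> (0, 0) \<longrightarrow>
         C1 * (exp (- \<i> * complex_of_real lam) - exp (\<i> * complex_of_real \<alpha>)
               + \<i> * exp (\<i> * complex_of_real \<alpha>) * cnj (vtilde v lam))
         - \<i> * C2 * (exp (- \<i> * complex_of_real lam) * vtilde v lam
               + \<i> * exp (\<i> * complex_of_real \<alpha>) * vhat v lam) = 0 \<longrightarrow>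
         C1 * (2 * \<i> + cnj (vtilde v lam)) + \<i> * C2 * (2 - vhat v lam) = 0 \<longrightarrow>
         eigenfunA v \<alpha> lam (\<lambda>x. C1 * exp (- \<i> * complex_of_real (lam * x))
             - \<i> * C2 * (LINT y:{0..x}|lborel. exp (- \<i> * complex_of_real (lam * (x - y))) * v y)))"
proof -
  have candidate: "(\<lambda>x. C1 * exp (- \<i> * complex_of_real (lam * x))
      - \<i> * C2 * (LINT y:{0..x}|lborel. exp (- \<i> * complex_of_real (lam * (x - y))) * v y))
      = eigen_candidate v lam C1 C2" for lam C1 C2
    unfolding eigen_candidate_def[abs_def] duhamel_def wave_def ..
  have "eigenvalueA v \<alpha> lam \<longleftrightarrow> chi v \<alpha> lam = 0" for lam
    unfolding eigenvalueA_def eigen_system_solvable_iff[symmetric]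
    by (metis eigenfunA_imp_eigen_system[OF hv] eigenfunA_eigen_candidate[OF hv])
  then show ?thesis
    using eigenfunA_eigen_candidate[OF hv] unfolding candidate eigen_system_def by blast
qed

end
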